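(* Let $G=(V,w,m)$ be a locally finite measured weighted graph with $D:=\operatorname{Deg}_{\max}<\infty$, $q:=q_{\min}>0$ and $\kappa(x,y)\ge0$ for all $x\ne y\in V$. Let $f:V\to\mathbb{R}$ be harmonic ($\Delta f=0$) with $\|\nabla f\|_\infty=1$. Let $\varepsilon\in(0,q/(4D))$ and let $x_0\neq y_0$ satisfy $f(x_0)-f(y_0)\ge d(x_0,y_0)-\varepsilon$. Then there exist $x'\in B_1(x_0)$ and $y'\in B_1(y_0)$ such that $$f(x')-f(y')>d(x',y')-\varepsilon\cdot\frac{10D}{q}\qquad\text{and}\qquad d(x',y')>d(x_0,y_0).$$
   Context: A measured weighted graph $G=(V,w,m)$: countable $V$, symmetric $w:V\times V\to[0,\infty)$ vanishing on the diagonal, $m:V\to(0,\infty)$; $x\sim y$ iff $w(x,y)>0$; locally finite means each vertex has finitely many neighbours. $q(x,y):=w(x,y)/m(x)$, $\Delta f(x):=\sum_y q(x,y)(f(y)-f(x))$, $\operatorname{Deg}_{\max}:=\sup_x\sum_y q(x,y)$, $q_{\min}:=\inf_{x\sim y}q(x,y)$. $d$ is the combinatorial graph distance and $B_1(x)=\{z:d(x,z)\le1\}$. For $x\ne y$, $\nabla_{xy}f:=(f(x)-f(y))/d(x,y)$, $\|\nabla f\|_\infty:=\sup_{x\sim y}\nabla_{xy}f$, and the Ollivier curvature is $\kappa(x,y):=\inf\{\nabla_{xy}\Delta f: \nabla_{yx}f=1,\ \|\nabla f\|_\infty=1\}$. *)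

theory Defs
  imports Complex_Main "HOL-Library.Extended_Real" "HOL-Library.Countable"
begin

definition weighted_graph :: "('a \<Rightarrow> 'a \<Rightarrow> real) \<Rightarrow> ('a \<Rightarrow> real) \<Rightarrow> bool" where
  "weighted_graph w m \<longleftrightarrow>
     (\<forall>x y. w x y = w y x) \<and> (\<forall>x y. 0 \<le> w x y) \<and> (\<forall>x. w x x = 0) \<and> (\<forall>x. 0 < m x)"

definition locally_finite :: "('a \<Rightarrow> 'a \<Rightarrow> real) \<Rightarrow> bool" where
  "locally_finite w \<longleftrightarrow> (\<forall>x. finite {y. 0 < w x y})"

definition qrate :: "('a \<Rightarrow> 'a \<Rightarrow> real) \<Rightarrow> ('a \<Rightarrow> real) \<Rightarrow> 'a \<Rightarrow> 'a \<Rightarrow> real" where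
  "qrate w m x y = w x y / m x"

definition laplacian :: "('a \<Rightarrow> 'a \<Rightarrow> real) \<Rightarrow> ('a \<Rightarrow> real) \<Rightarrow> ('a \<Rightarrow> real) \<Rightarrow> 'a \<Rightarrow> real" where
  "laplacian w m f x = (\<Sum>y\<in>{y. 0 < w x y}. qrate w m x y * (f y - f x))"

definition deg_max :: "('a \<Rightarrow> 'a \<Rightarrow> real) \<Rightarrow> ('a \<Rightarrow> real) \<Rightarrow> ereal" where
  "deg_max w m = (SUP x. ereal (\<Sum>y\<in>{y. 0 < w x y}. qrate w m x y))"

definition q_min :: "('a \<Rightarrow> 'a \<Rightarrow> real) \<Rightarrow> ('a \<Rightarrow> real) \<Rightarrow> ereal" where
  "q_min w m = (INF p\<in>{(x,y). 0 < w x y}. ereal (qrate w m (fst p) (snd p)))"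

definition edges :: "('a \<Rightarrow> 'a \<Rightarrow> real) \<Rightarrow> ('a \<times> 'a) set" where
  "edges w = {(x,y). 0 < w x y}"

definition gdist :: "('a \<Rightarrow> 'a \<Rightarrow> real) \<Rightarrow> 'a \<Rightarrow> 'a \<Rightarrow> enat" where
  "gdist w x y = (INF n\<in>{n. (x,y) \<in> edges w ^^ n}. enat n)"

text \<open>Gradient nabla_{xy} f = (f x - f y)/d(x,y) (only meaningful for x \<noteq> y at finite distance).\<close>
definition grad :: "('a \<Rightarrow> 'a \<Rightarrow> real) \<Rightarrow> ('a \<Rightarrow> real) \<Rightarrow> 'a \<Rightarrow> 'a \<Rightarrow> real" where
  "grad w f x y = (f x - f y) / real (the_enat (gdist w x y))"

definition grad_sup :: "('a \<Rightarrow> 'a \<Rightarrow> real) \<Rightarrow> ('a \<Rightarrow> real) \<Rightarrow> ereal" where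
  "grad_sup w f = (SUP p\<in>{(x,y). 0 < w x y}. ereal (grad w f (fst p) (snd p)))"

text \<open>Ollivier curvature kappa(x,y) = inf { nabla_{xy} Delta f : nabla_{yx} f = 1, |nabla f|_inf = 1 },
  as an extended real (inf of the empty set is +infinity). The condition nabla_{yx} f = 1
  includes finiteness of d(x,y).\<close>
definition ollivier :: "('a \<Rightarrow> 'a \<Rightarrow> real) \<Rightarrow> ('a \<Rightarrow> real) \<Rightarrow> 'a \<Rightarrow> 'a \<Rightarrow> ereal" where
  "ollivier w m x y = (INF f\<in>{f. gdist w y x \<noteq> \<infinity> \<and> grad w f y x = 1 \<and> grad_sup w f = 1}.
       ereal (grad w (laplacian w m f) x y))"

end

theory Submission
  imports Defs
begin

text \<open>Suppose no such pair exists. Write n = d(x0,y0), \<delta> = n - (f(x0) - f(y0)) \<le> \<epsilon> and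
E = 10 D \<epsilon> / q. On B1(y0) let h stretch f about y0 by the factor s = 4/(4 - E) > 1, adding s\<delta>
away from y0, and extend h to V by the McShane formula g(x) = min {d(x,y) + h(y) : y \<in> B1(y0)}.
Because no farther pair near (x0,y0) is almost extremal, g(x0) = f(x0) + \<delta> and g(y0) = f(y0), so
g is 1-Lipschitz with gradient 1 along (x0,y0), and nonnegative curvature gives
\<Delta>g(x0) \<le> \<Delta>g(y0). Comparing the increments of g with those of the harmonic f yields
\<Delta>g(y0) \<le> s\<delta> Deg(y0) and \<Delta>g(x0) \<ge> (s - 1) q(x0,x2) - s\<delta> Deg(x0), where x2 is the first
step of a geodesic from x0 to y0. As s E = 4 (s - 1), this gives
E q \<le> E q(x0,x2) \<le> 4\<delta>(Deg(x0) + Deg(y0)) \<le> 8 D \<epsilon> = 4/5 E q, a contradiction.\<close>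

lemma gdist_le_relpow: "(a, b) \<in> edges w ^^ k \<Longrightarrow> gdist w a b \<le> enat k"
  unfolding gdist_def by (rule INF_lower) simp

lemma gdist_eq_enat_relpow:
  assumes "gdist w a b = enat k"
  shows "(a, b) \<in> edges w ^^ k"
proof -
  let ?L = "enat ` {j. (a, b) \<in> edges w ^^ j}"
  have "?L \<noteq> {}" using assms unfolding gdist_def by (auto simp: Inf_enat_def split: if_splits)
  then have "Inf ?L \<in> ?L" unfolding Inf_enat_def by (metis (mono_tags, lifting) LeastI_ex ex_in_conv)
  then show ?thesis using assms unfolding gdist_def by auto
qed

lemma gdist_self [simp]: "gdist w a a = 0"
proof -
  have "gdist w a a \<le> enat 0" by (rule gdist_le_relpow) simp
  then show ?thesis by (simp add: zero_enat_def[symmetric])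
qed

lemma the_enat_0 [simp]: "the_enat 0 = 0"
  by (simp add: zero_enat_def)

lemma gdist_eq_0_iff: "gdist w a b = 0 \<longleftrightarrow> a = b"
  using gdist_eq_enat_relpow[of w a b 0] by (auto simp: zero_enat_def)

lemma gdist_triangle: "gdist w a c \<le> gdist w a b + gdist w b c"
proof (cases "gdist w a b = \<infinity> \<or> gdist w b c = \<infinity>")
  case False
  then obtain i j where ij: "gdist w a b = enat i" "gdist w b c = enat j" by auto
  then have "(a, c) \<in> edges w ^^ (i + j)"
    by (auto simp: relpow_add dest!: gdist_eq_enat_relpow)
  then show ?thesis using ij by (simp add: gdist_le_relpow)
qed auto

lemma gdist_le_add:
  assumes "gdist w a b \<le> enat i" "gdist w b c \<le> enat j"
  shows "gdist w a c \<le> enat (i + j)"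
  using gdist_triangle[of w a c b] add_mono[OF assms] by simp

lemma edges_relpow_sym:
  assumes G: "weighted_graph w m"
  shows "(a, b) \<in> edges w ^^ k \<Longrightarrow> (b, a) \<in> edges w ^^ k"
proof (induction k arbitrary: b)
  case (Suc k)
  then obtain c where "(a, c) \<in> edges w ^^ k" "(c, b) \<in> edges w" by auto
  moreover have "(b, c) \<in> edges w" using \<open>(c, b) \<in> edges w\<close> G
    by (simp add: edges_def weighted_graph_def)
  ultimately show ?case using Suc.IH by (blast intro: relpow_Suc_I2)
qed simp

lemma gdist_commute:
  assumes "weighted_graph w m"
  shows "gdist w a b = gdist w b a"
proof -
  have "{k. (a, b) \<in> edges w ^^ k} = {k. (b, a) \<in> edges w ^^ k}"
    using edges_relpow_sym[OF assms] by blast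
  then show ?thesis by (simp add: gdist_def)
qed

lemma gdist_edge:
  assumes "weighted_graph w m" "0 < w a b"
  shows "gdist w a b = 1"
proof -
  have "gdist w a b \<le> 1" using assms(2) gdist_le_relpow[where k=1] by (simp add: edges_def one_enat_def)
  moreover have "a \<noteq> b" using assms unfolding weighted_graph_def by auto
  ultimately show ?thesis using gdist_eq_0_iff[of w a b]
    by (cases "gdist w a b") (auto simp: one_enat_def zero_enat_def)
qed

lemma gdist_le_1_iff:
  assumes "weighted_graph w m"
  shows "gdist w x y \<le> 1 \<longleftrightarrow> y = x \<or> 0 < w x y"
proof
  assume "gdist w x y \<le> 1"
  then obtain k where "gdist w x y = enat k" "k \<le> 1"
    by (cases "gdist w x y") (auto simp: one_enat_def)
  then have "(x, y) \<in> edges w ^^ k" "k = 0 \<or> k = 1" by (auto dest: gdist_eq_enat_relpow)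
  then show "y = x \<or> 0 < w x y" by (auto simp: edges_def)
next
  assume "y = x \<or> 0 < w x y"
  then show "gdist w x y \<le> 1" using gdist_edge[OF assms] by auto
qed

lemma gdist_first_stepE:
  assumes "gdist w x y = enat n" "x \<noteq> y"
  obtains z where "0 < w x z" "gdist w z y < enat n"
proof -
  obtain k where k: "n = Suc k"
    using assms gdist_eq_0_iff[of w x y] by (cases n) (auto simp: zero_enat_def)
  then obtain z where xz: "(x, z) \<in> edges w" and zy: "(z, y) \<in> edges w ^^ k"
    using relpow_Suc_D2[OF gdist_eq_enat_relpow[OF assms(1)[unfolded k]]] by blast
  have "gdist w z y \<le> enat k" using zy by (rule gdist_le_relpow)
  then show ?thesis using xz k by (intro that[of z]) (auto simp: edges_def intro: order.strict_trans1)
qed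

lemma edge_lipschitz_gdist:
  fixes h :: "'a \<Rightarrow> real"
  assumes lip: "\<And>a b. 0 < w a b \<Longrightarrow> h a - h b \<le> 1" and dist: "gdist w a b = enat k"
  shows "h a - h b \<le> real k"
proof -
  have "(a, c) \<in> edges w ^^ j \<Longrightarrow> h a - h c \<le> real j" for j c
  proof (induction j arbitrary: c)
    case (Suc j)
    then obtain d where "(a, d) \<in> edges w ^^ j" "(d, c) \<in> edges w" by auto
    then show ?case using Suc.IH lip[of d c] by (fastforce simp: edges_def)
  qed simp
  then show ?thesis using gdist_eq_enat_relpow[OF dist] .
qed

text \<open>If c is not reachable from b, it is not reachable from a either, and both sides carry the
same unspecified value of the_enat \<infinity>.\<close>
lemma the_enat_gdist_edge_le:
  assumes G: "weighted_graph w m" and ab: "0 < w a b"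
  shows "real (the_enat (gdist w a c)) \<le> real (the_enat (gdist w b c)) + 1"
proof -
  have "0 < w b a" using G ab by (simp add: weighted_graph_def)
  have ac: "gdist w a c \<le> 1 + gdist w b c"
    using gdist_triangle[of w a c b] gdist_edge[OF G ab] by simp
  have bc: "gdist w b c \<le> 1 + gdist w a c"
    using gdist_triangle[of w b c a] gdist_edge[OF G \<open>0 < w b a\<close>] by simp
  show ?thesis
  proof (cases "gdist w b c")
    case (enat j)
    with ac show ?thesis by (cases "gdist w a c") (auto simp: one_enat_def)
  next
    case infinity
    with bc show ?thesis by (cases "gdist w a c") (auto simp: one_enat_def)
  qed
qed

definition degree :: "('a \<Rightarrow> 'a \<Rightarrow> real) \<Rightarrow> ('a \<Rightarrow> real) \<Rightarrow> 'a \<Rightarrow> real" where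
  "degree w m x = (\<Sum>y\<in>{y. 0 < w x y}. qrate w m x y)"

lemma qrate_nonneg: "weighted_graph w m \<Longrightarrow> 0 \<le> qrate w m x y"
  unfolding weighted_graph_def qrate_def by (simp add: less_imp_le)

lemma degree_nonneg: "weighted_graph w m \<Longrightarrow> 0 \<le> degree w m x"
  unfolding degree_def by (intro sum_nonneg qrate_nonneg)

lemma degree_le_deg_max:
  assumes "deg_max w m = ereal D"
  shows "degree w m x \<le> D"
proof -
  have "ereal (degree w m x) \<le> deg_max w m"
    unfolding deg_max_def degree_def by (rule SUP_upper) simp
  with assms show ?thesis by simp
qed

lemma q_min_le_qrate:
  assumes "q_min w m = ereal q" "0 < w x y"
  shows "q \<le> qrate w m x y"
proof -
  have "q_min w m \<le> ereal (qrate w m x y)"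
    unfolding q_min_def by (rule INF_lower2[of "(x, y)"]) (use assms(2) in auto)
  with assms(1) show ?thesis by simp
qed

lemma qrate_le_degree:
  assumes "weighted_graph w m" "locally_finite w" "0 < w x y"
  shows "qrate w m x y \<le> degree w m x"
  unfolding degree_def using assms qrate_nonneg[OF assms(1)]
  by (intro member_le_sum) (auto simp: locally_finite_def)

lemma grad_sup_le_1_iff:
  assumes "weighted_graph w m"
  shows "grad_sup w h \<le> 1 \<longleftrightarrow> (\<forall>a b. 0 < w a b \<longrightarrow> h a - h b \<le> 1)"
  unfolding grad_sup_def grad_def using gdist_edge[OF assms]
  by (auto simp: SUP_le_iff one_enat_def)

lemma grad_sup_ge_edge:
  assumes "weighted_graph w m" "0 < w a b"
  shows "ereal (h a - h b) \<le> grad_sup w h"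
  unfolding grad_sup_def
  by (rule SUP_upper2[of "(a, b)"])
    (use assms gdist_edge[OF assms] in \<open>auto simp: grad_def one_enat_def\<close>)

lemma laplacian_ge_of_increments:
  assumes G: "weighted_graph w m"
    and incr: "\<And>y. 0 < w x y \<Longrightarrow> c * (h y - h x) + b y \<le> g y - g x"
  shows "c * laplacian w m h x + (\<Sum>y\<in>{y. 0 < w x y}. qrate w m x y * b y) \<le> laplacian w m g x"
proof -
  have "c * laplacian w m h x + (\<Sum>y\<in>{y. 0 < w x y}. qrate w m x y * b y)
      = (\<Sum>y\<in>{y. 0 < w x y}. qrate w m x y * (c * (h y - h x) + b y))"
    unfolding laplacian_def by (simp add: distrib_left sum.distrib sum_distrib_left mult.left_commute)
  also have "\<dots> \<le> laplacian w m g x"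
    unfolding laplacian_def using incr qrate_nonneg[OF G] by (intro sum_mono mult_left_mono) auto
  finally show ?thesis .
qed

lemma laplacian_le_of_increments:
  assumes G: "weighted_graph w m"
    and incr: "\<And>y. 0 < w x y \<Longrightarrow> g y - g x \<le> c * (h y - h x) + b y"
  shows "laplacian w m g x \<le> c * laplacian w m h x + (\<Sum>y\<in>{y. 0 < w x y}. qrate w m x y * b y)"
proof -
  have "laplacian w m g x \<le> (\<Sum>y\<in>{y. 0 < w x y}. qrate w m x y * (c * (h y - h x) + b y))"
    unfolding laplacian_def using incr qrate_nonneg[OF G] by (intro sum_mono mult_left_mono) auto
  also have "\<dots> = c * laplacian w m h x + (\<Sum>y\<in>{y. 0 < w x y}. qrate w m x y * b y)"
    unfolding laplacian_def by (simp add: distrib_left sum.distrib sum_distrib_left mult.left_commute)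
  finally show ?thesis .
qed

lemma laplacian_le_of_ollivier_nonneg:
  assumes G: "weighted_graph w m" and curv: "0 \<le> ollivier w m y x"
    and dist: "gdist w x y = enat n" "0 < n"
    and lip: "grad_sup w g = 1" and gap: "g x - g y = real n"
  shows "laplacian w m g x \<le> laplacian w m g y"
proof -
  have "ollivier w m y x \<le> ereal (grad w (laplacian w m g) y x)"
    unfolding ollivier_def using dist gap lip by (intro INF_lower) (simp add: grad_def)
  with curv have "0 \<le> grad w (laplacian w m g) y x" using order_trans by fastforce
  moreover have "gdist w y x = enat n" using dist gdist_commute[OF G] by metis
  ultimately show ?thesis using dist unfolding grad_def by (simp add: zero_le_divide_iff)
qed

definition mcshane_ext :: "('a \<Rightarrow> 'a \<Rightarrow> real) \<Rightarrow> 'a set \<Rightarrow> ('a \<Rightarrow> real) \<Rightarrow> 'a \<Rightarrow> real" where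
  "mcshane_ext w S c x = Min ((\<lambda>y. real (the_enat (gdist w x y)) + c y) ` S)"

lemma mcshane_ext_le:
  "finite S \<Longrightarrow> y \<in> S \<Longrightarrow> mcshane_ext w S c x \<le> real (the_enat (gdist w x y)) + c y"
  unfolding mcshane_ext_def by (rule Min_le) auto

lemma mcshane_ext_greatest:
  "finite S \<Longrightarrow> S \<noteq> {} \<Longrightarrow> (\<And>y. y \<in> S \<Longrightarrow> t \<le> real (the_enat (gdist w x y)) + c y)
    \<Longrightarrow> t \<le> mcshane_ext w S c x"
  unfolding mcshane_ext_def by (rule Min.boundedI) auto

lemma mcshane_ext_edge_lipschitz:
  assumes G: "weighted_graph w m" and S: "finite S" "S \<noteq> {}" and ab: "0 < w a b"
  shows "mcshane_ext w S c a - mcshane_ext w S c b \<le> 1"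
proof -
  have "mcshane_ext w S c a - 1 \<le> mcshane_ext w S c b"
  proof (rule mcshane_ext_greatest[OF S])
    fix y assume "y \<in> S"
    then show "mcshane_ext w S c a - 1 \<le> real (the_enat (gdist w b y)) + c y"
      using mcshane_ext_le[OF S(1) \<open>y \<in> S\<close>, of w c a] the_enat_gdist_edge_le[OF G ab, of y]
      by linarith
  qed
  then show ?thesis by simp
qed

text \<open>The Lipschitz and near-extremality hypotheses of lemma2p3 together with the negation of
its conclusion, for E = 10 D \<epsilon> / q.\<close>
locale nonextendable_pair =
  fixes w :: "'a \<Rightarrow> 'a \<Rightarrow> real" and m :: "'a \<Rightarrow> real" and f :: "'a \<Rightarrow> real"
    and x0 y0 :: 'a and n :: nat and \<delta> E :: real
  assumes graph: "weighted_graph w m" and locfin: "locally_finite w"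
    and lipschitz: "\<And>a b. 0 < w a b \<Longrightarrow> f a - f b \<le> 1"
    and dist: "gdist w x0 y0 = enat n" and n_pos: "0 < n"
    and gap: "f x0 - f y0 = real n - \<delta>"
    and E_pos: "0 < E" and E_less: "E < 5 / 2" and delta_le: "10 * \<delta> \<le> E"
    and no_farther: "\<And>x y k. gdist w x0 x \<le> 1 \<Longrightarrow> gdist w y0 y \<le> 1 \<Longrightarrow> gdist w x y = enat k
      \<Longrightarrow> n < k \<Longrightarrow> f x - f y \<le> real k - E"
begin

lemma f_diff_le_gdist: "gdist w a b = enat k \<Longrightarrow> f a - f b \<le> real k"
  using edge_lipschitz_gdist[where h = f, OF lipschitz] .

lemma delta_nonneg: "0 \<le> \<delta>"
  using f_diff_le_gdist[OF dist] gap by simp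

definition slope :: real where
  "slope = 4 / (4 - E)"

lemma slope_gt_1: "1 < slope"
  using E_pos E_less by (simp add: slope_def field_simps)

lemma slope_times_E: "slope * E = 4 * (slope - 1)"
  using E_less by (simp add: slope_def field_simps)

lemma slope_min_E_1: "-1 \<le> slope * (min E 1 - 1)"
proof (cases "E < 1")
  case True
  then show ?thesis using E_pos by (simp add: slope_def field_simps)
qed simp

lemma slope_min_E_1_delta: "slope - 1 \<le> slope * (min E 1 - \<delta>)"
proof -
  have "E / 4 \<le> min E 1 - \<delta>" using E_less delta_le delta_nonneg by simp
  then have "slope * (E / 4) \<le> slope * (min E 1 - \<delta>)" using slope_gt_1 by simp
  then show ?thesis using slope_times_E by simp
qed

definition ball_y0 :: "'a set" where
  "ball_y0 = {y. gdist w y0 y \<le> 1}"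

lemma finite_ball_y0: "finite ball_y0"
proof -
  have "ball_y0 = insert y0 {y. 0 < w y0 y}"
    unfolding ball_y0_def gdist_le_1_iff[OF graph] by auto
  then show ?thesis using locfin by (simp add: locally_finite_def)
qed

lemma y0_in_ball_y0: "y0 \<in> ball_y0"
  by (simp add: ball_y0_def)

lemma gdist_x0_ball_y0: "y \<in> ball_y0 \<Longrightarrow> gdist w x0 y \<le> enat (n + 1)"
  using gdist_le_add[of w x0 y0 n y 1] dist by (simp add: ball_y0_def one_enat_def)

lemma f_x0_minus_ball_y0:
  assumes y: "y \<in> ball_y0"
  shows "f x0 - f y \<le> real n + 1 - min E 1"
proof -
  obtain k where k: "gdist w x0 y = enat k" "k \<le> n + 1"
    using gdist_x0_ball_y0[OF y] by (cases "gdist w x0 y") auto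
  show ?thesis
  proof (cases "n < k")
    case True
    then have "k = n + 1" using k by simp
    then show ?thesis using no_farther[of x0 y k] y k True by (simp add: ball_y0_def)
  next
    case False
    then show ?thesis using f_diff_le_gdist[OF k(1)] by simp
  qed
qed

lemma slope_gap_ball_y0:
  assumes "y \<in> ball_y0"
  shows "-1 \<le> slope * (real n - (f x0 - f y))"
proof -
  have "min E 1 - 1 \<le> real n - (f x0 - f y)" using f_x0_minus_ball_y0[OF assms] by simp
  then have "slope * (min E 1 - 1) \<le> slope * (real n - (f x0 - f y))"
    using slope_gt_1 by (simp add: mult_left_mono)
  then show ?thesis using slope_min_E_1 by simp
qed

definition target :: "'a \<Rightarrow> real" where
  "target y = f y0 + slope * (f y - f y0 + (if y = y0 then 0 else \<delta>))"

lemma target_off_y0: "y \<noteq> y0 \<Longrightarrow> target y = f y0 + slope * (real n - (f x0 - f y))"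
  using gap by (simp add: target_def)

definition test :: "'a \<Rightarrow> real" where
  "test = mcshane_ext w ball_y0 target"

lemma test_x0: "test x0 = f x0 + \<delta>"
proof (rule antisym)
  show "test x0 \<le> f x0 + \<delta>"
    using mcshane_ext_le[OF finite_ball_y0 y0_in_ball_y0, of w target x0] dist gap
    by (simp add: test_def target_def)
  show "f x0 + \<delta> \<le> test x0"
    unfolding test_def
  proof (rule mcshane_ext_greatest[OF finite_ball_y0])
    fix y assume y: "y \<in> ball_y0"
    show "f x0 + \<delta> \<le> real (the_enat (gdist w x0 y)) + target y"
    proof (cases "y = y0")
      case True
      then show ?thesis using dist gap by (simp add: target_def)
    next
      case False
      obtain k where k: "gdist w x0 y = enat k" "k \<le> n + 1"
        using gdist_x0_ball_y0[OF y] by (cases "gdist w x0 y") auto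
      have "real n - real k \<le> slope * (real n - (f x0 - f y))"
      proof (cases "k \<le> n")
        case True
        then have "real n - real k \<le> real n - (f x0 - f y)" using f_diff_le_gdist[OF k(1)] by simp
        also have "\<dots> \<le> slope * (real n - (f x0 - f y))"
          using slope_gt_1 \<open>k \<le> n\<close> f_diff_le_gdist[OF k(1)] by (simp add: mult_le_cancel_right1)
        finally show ?thesis .
      next
        case False
        then show ?thesis using k slope_gap_ball_y0[OF y] by simp
      qed
      then show ?thesis using k gap target_off_y0[OF False] by simp
    qed
  qed (use y0_in_ball_y0 in auto)
qed

lemma test_y0: "test y0 = f y0"
proof (rule antisym)
  show "test y0 \<le> f y0"
    using mcshane_ext_le[OF finite_ball_y0 y0_in_ball_y0, of w target y0]
    by (simp add: test_def target_def)
  show "f y0 \<le> test y0"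
    unfolding test_def
  proof (rule mcshane_ext_greatest[OF finite_ball_y0])
    fix y assume y: "y \<in> ball_y0"
    show "f y0 \<le> real (the_enat (gdist w y0 y)) + target y"
    proof (cases "y = y0")
      case False
      then have "gdist w y0 y = 1" using y gdist_le_1_iff[OF graph] gdist_edge[OF graph]
        by (auto simp: ball_y0_def)
      then show ?thesis using slope_gap_ball_y0[OF y] target_off_y0[OF False]
        by (simp add: one_enat_def)
    qed (simp add: target_def)
  qed (use y0_in_ball_y0 in auto)
qed

lemma test_lipschitz: "0 < w a b \<Longrightarrow> test a - test b \<le> 1"
  unfolding test_def using mcshane_ext_edge_lipschitz[OF graph finite_ball_y0] y0_in_ball_y0 by blast

lemma gdist_neighbour_ball_y0:
  assumes "0 < w x0 x" "y \<in> ball_y0"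
  shows "gdist w x y \<le> enat (n + 2)"
proof -
  have "gdist w x x0 \<le> enat 1"
    using gdist_edge[OF graph assms(1)] gdist_commute[OF graph, of x0 x] by (simp add: one_enat_def)
  then show ?thesis using gdist_le_add[OF _ gdist_x0_ball_y0[OF assms(2)]] by fastforce
qed

lemma gain_at_neighbour:
  assumes x: "0 < w x0 x" and y: "y \<in> ball_y0" and k: "gdist w x y = enat k"
  shows "0 \<le> (real k - real n) + slope * (real n - (f x - f y))"
proof (cases "n < k")
  case True
  have "k \<le> n + 2" using gdist_neighbour_ball_y0[OF x y] k by simp
  have "f x - f y \<le> real k - E"
    using no_farther[OF _ _ k True] x y gdist_edge[OF graph x] by (simp add: ball_y0_def)
  then have "slope * (real n - real k + E) \<le> slope * (real n - (f x - f y))"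
    using slope_gt_1 by (simp add: mult_left_mono)
  moreover have "(real k - real n) * (slope - 1) \<le> 2 * (slope - 1)"
    using \<open>k \<le> n + 2\<close> slope_gt_1 by (intro mult_right_mono) auto
  ultimately show ?thesis using slope_times_E slope_gt_1 by (simp add: algebra_simps)
next
  case False
  then have "0 \<le> real n - (f x - f y)" and "real n - real k \<le> real n - (f x - f y)"
    using f_diff_le_gdist[OF k] by simp_all
  moreover have "real n - (f x - f y) \<le> slope * (real n - (f x - f y))"
    using calculation(1) slope_gt_1 by (simp add: mult_le_cancel_right1)
  ultimately show ?thesis by simp
qed

lemma gain_at_geodesic_step:
  assumes x2: "gdist w x2 y0 < enat n" and y: "y \<in> ball_y0" and k: "gdist w x2 y = enat k"
  shows "slope - 1 \<le> (real k - real n) + slope * (real n - (f x2 - f y))"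
proof -
  obtain j where j: "gdist w x2 y0 = enat j" "j < n"
    using x2 by (cases "gdist w x2 y0") auto
  have "gdist w x2 y \<le> enat (j + 1)"
    using gdist_le_add[of w x2 y0 j y 1] j y by (simp add: ball_y0_def one_enat_def)
  then have "k \<le> n" using k j by simp
  show ?thesis
  proof (cases "k < n")
    case True
    then have "real n - real k \<le> real n - (f x2 - f y)" using f_diff_le_gdist[OF k] by simp
    then have "slope * (real n - real k) \<le> slope * (real n - (f x2 - f y))"
      using slope_gt_1 by (simp add: mult_left_mono)
    moreover have "slope - 1 \<le> (slope - 1) * (real n - real k)"
      using True slope_gt_1 by (simp add: mult_le_cancel_left1)
    ultimately show ?thesis by (simp add: algebra_simps)
  next
    case False
    have "f x2 - f y0 \<le> real n - 1" using f_diff_le_gdist[OF j(1)] j(2) by simp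
    then have "min E 1 - \<delta> \<le> real n - (f x2 - f y)" using f_x0_minus_ball_y0[OF y] gap by simp
    then have "slope * (min E 1 - \<delta>) \<le> slope * (real n - (f x2 - f y))"
      using slope_gt_1 by (simp add: mult_left_mono)
    then show ?thesis using slope_min_E_1_delta False \<open>k \<le> n\<close> by simp
  qed
qed

lemma test_ge_near_x0:
  assumes x2: "gdist w x2 y0 < enat n" and x: "0 < w x0 x"
  shows "test x0 + slope * (f x - f x0 - \<delta>) + (if x = x2 then slope - 1 else 0) \<le> test x"
proof -
  have "f x0 + \<delta> + slope * (f x - f x0 - \<delta>) + (if x = x2 then slope - 1 else 0)
      \<le> mcshane_ext w ball_y0 target x"
  proof (rule mcshane_ext_greatest[OF finite_ball_y0])
    fix y assume y: "y \<in> ball_y0"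
    obtain k where k: "gdist w x y = enat k"
      using gdist_neighbour_ball_y0[OF x y] by (cases "gdist w x y") auto
    have gain: "(if x = x2 then slope - 1 else 0)
        \<le> (real k - real n) + slope * (real n - (f x - f y))"
      using gain_at_neighbour[OF x y k] gain_at_geodesic_step[OF x2 y] k by auto
    have "real n - (f x - f y) + (f x - f x0 - \<delta>) = f y - f y0" using gap by simp
    then have regroup:
        "slope * (real n - (f x - f y)) + slope * (f x - f x0 - \<delta>) = slope * (f y - f y0)"
      by (metis distrib_left)
    have "f y0 + slope * (f y - f y0) \<le> target y"
      using slope_gt_1 delta_nonneg by (simp add: target_def distrib_left)
    then show "f x0 + \<delta> + slope * (f x - f x0 - \<delta>) + (if x = x2 then slope - 1 else 0)
        \<le> real (the_enat (gdist w x y)) + target y"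
      unfolding k the_enat.simps using gain regroup gap by linarith
  qed (use y0_in_ball_y0 in auto)
  then show ?thesis unfolding test_x0 by (simp add: test_def)
qed

lemma test_le_near_y0:
  assumes y: "0 < w y0 y"
  shows "test y - test y0 \<le> slope * (f y - f y0) + slope * \<delta>"
proof -
  have "y \<in> ball_y0" "y \<noteq> y0"
    using y graph gdist_le_1_iff[OF graph] by (auto simp: ball_y0_def weighted_graph_def)
  then have "test y \<le> target y"
    using mcshane_ext_le[OF finite_ball_y0, of y w target y] by (simp add: test_def)
  then show ?thesis using \<open>y \<noteq> y0\<close> by (simp add: test_y0 target_def distrib_left)
qed

lemma test_grad_sup:
  assumes x2: "0 < w x0 x2" "gdist w x2 y0 < enat n"
  shows "grad_sup w test = 1"
proof (rule antisym)
  show "grad_sup w test \<le> 1" using test_lipschitz grad_sup_le_1_iff[OF graph] by blast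
  obtain j where j: "gdist w x2 y0 = enat j" "j < n"
    using x2(2) by (cases "gdist w x2 y0") auto
  have "test x2 - test y0 \<le> real j"
    using edge_lipschitz_gdist[where h = test, OF test_lipschitz j(1)] .
  then have "(1::ereal) \<le> ereal (test x0 - test x2)" using test_x0 test_y0 gap j(2) by simp
  then show "1 \<le> grad_sup w test" using grad_sup_ge_edge[OF graph x2(1)] by (rule order_trans)
qed

lemma laplacian_test_x0:
  assumes x2: "0 < w x0 x2" "gdist w x2 y0 < enat n" and harm: "laplacian w m f x0 = 0"
  shows "(slope - 1) * qrate w m x0 x2 - slope * \<delta> * degree w m x0 \<le> laplacian w m test x0"
proof -
  let ?N = "{y. 0 < w x0 y}" and ?b = "\<lambda>y. (if y = x2 then slope - 1 else 0) - slope * \<delta>"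
  have "slope * laplacian w m f x0 + (\<Sum>y\<in>?N. qrate w m x0 y * ?b y) \<le> laplacian w m test x0"
  proof (rule laplacian_ge_of_increments[OF graph])
    fix y assume "0 < w x0 y"
    from test_ge_near_x0[OF x2(2) this]
    show "slope * (f y - f x0) + ?b y \<le> test y - test x0" by (simp add: algebra_simps)
  qed
  moreover have "(\<Sum>y\<in>?N. qrate w m x0 y * (if y = x2 then slope - 1 else 0))
      = (slope - 1) * qrate w m x0 x2"
    using x2(1) locfin by (simp add: locally_finite_def if_distrib cong: if_cong)
  then have "(\<Sum>y\<in>?N. qrate w m x0 y * ?b y)
      = (slope - 1) * qrate w m x0 x2 - slope * \<delta> * degree w m x0"
    by (simp add: right_diff_distrib sum_subtractf degree_def sum_distrib_left mult.commute)
  ultimately show ?thesis using harm by simp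
qed

lemma laplacian_test_y0:
  assumes harm: "laplacian w m f y0 = 0"
  shows "laplacian w m test y0 \<le> slope * \<delta> * degree w m y0"
proof -
  have "laplacian w m test y0
      \<le> slope * laplacian w m f y0 + (\<Sum>y\<in>{y. 0 < w y0 y}. qrate w m y0 y * (slope * \<delta>))"
    by (rule laplacian_le_of_increments[OF graph]) (use test_le_near_y0 in auto)
  then show ?thesis using harm by (simp add: degree_def sum_distrib_left mult.commute)
qed

lemma step_rate_bound:
  assumes x2: "0 < w x0 x2" "gdist w x2 y0 < enat n" and curv: "0 \<le> ollivier w m y0 x0"
    and harm: "laplacian w m f x0 = 0" "laplacian w m f y0 = 0"
  shows "E * qrate w m x0 x2 \<le> 4 * \<delta> * (degree w m x0 + degree w m y0)"
proof -
  have "laplacian w m test x0 \<le> laplacian w m test y0"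
    using laplacian_le_of_ollivier_nonneg[OF graph curv dist n_pos test_grad_sup[OF x2]]
      test_x0 test_y0 gap by simp
  then have "(slope - 1) * qrate w m x0 x2 \<le> slope * (\<delta> * (degree w m x0 + degree w m y0))"
    using laplacian_test_x0[OF x2 harm(1)] laplacian_test_y0[OF harm(2)]
    by (simp add: algebra_simps)
  then have "E * ((slope - 1) * qrate w m x0 x2)
      \<le> (slope * E) * (\<delta> * (degree w m x0 + degree w m y0))"
    using E_pos by (simp add: mult_left_mono)
  then have "(slope - 1) * (E * qrate w m x0 x2)
      \<le> (slope - 1) * (4 * \<delta> * (degree w m x0 + degree w m y0))"
    unfolding slope_times_E by (simp add: algebra_simps)
  then show ?thesis using slope_gt_1 by simp
qed

end

lemma epsilon_scaling_bounds:
  fixes q D \<epsilon> :: real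
  assumes "0 < q" "q \<le> D" "0 < \<epsilon>" "\<epsilon> < q / (4 * D)"
  shows "0 < \<epsilon> * (10 * D / q)" "\<epsilon> * (10 * D / q) < 5 / 2" "10 * \<epsilon> \<le> \<epsilon> * (10 * D / q)"
proof -
  have D: "0 < D" using assms by linarith
  then show "0 < \<epsilon> * (10 * D / q)" using assms by simp
  have "\<epsilon> * (10 * D / q) < q / (4 * D) * (10 * D / q)"
    using assms D by (intro mult_strict_right_mono) auto
  also have "\<dots> = 5 / 2" using assms D by (simp add: field_simps)
  finally show "\<epsilon> * (10 * D / q) < 5 / 2" .
  have "10 \<le> 10 * D / q" using assms by (simp add: field_simps)
  then have "\<epsilon> * 10 \<le> \<epsilon> * (10 * D / q)" using assms by (intro mult_left_mono) auto
  then show "10 * \<epsilon> \<le> \<epsilon> * (10 * D / q)" by linarith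
qed

theorem lemma2p3:
  fixes w :: "'a::countable \<Rightarrow> 'a \<Rightarrow> real" and m :: "'a \<Rightarrow> real" and f :: "'a \<Rightarrow> real"
    and D q \<epsilon> :: real and x0 y0 :: 'a
  assumes G: "weighted_graph w m" and lf: "locally_finite w"
    and D: "deg_max w m = ereal D" and q: "q_min w m = ereal q" and qpos: "q > 0"
    and curv: "\<forall>x y. x \<noteq> y \<longrightarrow> ollivier w m x y \<ge> 0"
    and harm: "\<forall>x. laplacian w m f x = 0"
    and lip: "grad_sup w f = 1"
    and eps: "0 < \<epsilon>" "\<epsilon> < q / (4 * D)"
    and xy: "x0 \<noteq> y0"
    and near: "ereal (f x0 - f y0) \<ge> ereal_of_enat (gdist w x0 y0) - ereal \<epsilon>"
  shows "\<exists>x' y'. gdist w x0 x' \<le> 1 \<and> gdist w y0 y' \<le> 1 \<and>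
           ereal (f x' - f y') > ereal_of_enat (gdist w x' y') - ereal (\<epsilon> * (10 * D / q)) \<and>
           gdist w x' y' > gdist w x0 y0"
proof (rule ccontr)
  assume not_far: "\<not> ?thesis"
  define E where "E = \<epsilon> * (10 * D / q)"
  obtain n where n: "gdist w x0 y0 = enat n" using near by (cases "gdist w x0 y0") auto
  obtain x2 where x2: "0 < w x0 x2" "gdist w x2 y0 < enat n" using gdist_first_stepE[OF n xy] .
  then have "0 < n" by (cases "gdist w x2 y0") auto
  have "q \<le> D"
    using q_min_le_qrate[OF q x2(1)] qrate_le_degree[OF G lf x2(1)] degree_le_deg_max[OF D, of x0]
    by linarith
  note E_bounds = epsilon_scaling_bounds[OF qpos this eps, folded E_def]
  have lipschitz: "\<And>a b. 0 < w a b \<Longrightarrow> f a - f b \<le> 1" using lip grad_sup_le_1_iff[OF G, of f] by simp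
  interpret nonextendable_pair w m f x0 y0 n "real n - (f x0 - f y0)" E
  proof unfold_locales
    fix x y j
    assume near_pair: "gdist w x0 x \<le> 1" "gdist w y0 y \<le> 1" "gdist w x y = enat j" "n < j"
    have "\<not> (ereal (f x - f y) > ereal_of_enat (gdist w x y) - ereal E
        \<and> gdist w x y > gdist w x0 y0)"
      using not_far near_pair(1,2) unfolding E_def by blast
    then show "f x - f y \<le> real j - E" using near_pair(3,4) n by simp
  qed (use G lf lipschitz n \<open>0 < n\<close> E_bounds near in auto)
  have "E * qrate w m x0 x2 \<le> 4 * (real n - (f x0 - f y0)) * (degree w m x0 + degree w m y0)"
    using step_rate_bound[OF x2] curv xy harm by simp
  also have "\<dots> \<le> 4 * \<epsilon> * (D + D)"
    using near n delta_nonneg degree_le_deg_max[OF D] degree_nonneg[OF G]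
    by (intro mult_mono add_mono add_nonneg_nonneg) auto
  also have "\<dots> = 4 / 5 * (E * q)" using qpos by (simp add: E_def)
  also have "\<dots> < E * qrate w m x0 x2"
    using q_min_le_qrate[OF q x2(1)] E_bounds(1) qpos by (simp add: mult_left_mono)
  finally show False by simp
qed

end
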